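(* Let $\delta\in(0,1)$. With probability at least $1-\delta$ over the random draw of the training set $S=(\boldsymbol{x}_1,\dots,\boldsymbol{x}_n)$, every linear classifier $f(\boldsymbol{x})=\langle\boldsymbol{w},\boldsymbol{x}\rangle$ that maximizes the $L^2$-margin $\gamma_2(\boldsymbol{w}):=\min_{i\in[n]}\frac{y_i\langle\boldsymbol{w},\boldsymbol{x}_i\rangle}{\|\boldsymbol{w}\|_2}$ on $S$ satisfies $$\mathbb{E}_{\boldsymbol{x}\sim\mathcal{D}_X}\big[\mathbb{1}[y^*(\boldsymbol{x})f(\boldsymbol{x})\le0]\big]\le4\sqrt{\frac{kd}{n}}+3\sqrt{\frac{\log(2/\delta)}{2n}}.$$
   Context: $\mathcal{D}_X$ is the uniform distribution on $\{\pm1\}^d$. $k$ is a positive odd integer. The vector $\boldsymbol{w}^*\in\mathbb{R}^d$ has its first $k$ coordinates drawn uniformly from $\{\pm1\}^k$ and all other coordinates $0$; $y^*(\boldsymbol{x})=\mathrm{sign}(\langle\boldsymbol{w}^*,\boldsymbol{x}\rangle)$. The training inputs are i.i.d. from $\mathcal{D}_X$ and $y_i=y^*(\boldsymbol{x}_i)$. *)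

theory Defs
  imports "HOL-Analysis.Analysis" "HOL-Probability.Probability"
begin

text \<open>Vectors in R^d are represented as functions nat => real; only coordinates i < d matter.\<close>

definition ip :: "nat \<Rightarrow> (nat \<Rightarrow> real) \<Rightarrow> (nat \<Rightarrow> real) \<Rightarrow> real" where
  "ip d w x = (\<Sum>i<d. w i * x i)"

definition norm2 :: "nat \<Rightarrow> (nat \<Rightarrow> real) \<Rightarrow> real" where
  "norm2 d w = sqrt (\<Sum>i<d. (w i)^2)"

definition cube :: "nat \<Rightarrow> (nat \<Rightarrow> real) set" where
  "cube d = {x. (\<forall>i<d. x i \<in> {-1, 1}) \<and> (\<forall>i\<ge>d. x i = 0)}"

definition DX :: "nat \<Rightarrow> (nat \<Rightarrow> real) pmf" where
  "DX d = pmf_of_set (cube d)"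

definition ystar :: "nat \<Rightarrow> (nat \<Rightarrow> real) \<Rightarrow> (nat \<Rightarrow> real) \<Rightarrow> real" where
  "ystar d ws x = sgn (ip d ws x)"

definition sample :: "nat \<Rightarrow> nat \<Rightarrow> (nat \<Rightarrow> (nat \<Rightarrow> real)) pmf" where
  "sample d n = Pi_pmf {..<n} (\<lambda>_. 0) (\<lambda>_. DX d)"

definition margin2 :: "nat \<Rightarrow> nat \<Rightarrow> (nat \<Rightarrow> real) \<Rightarrow> (nat \<Rightarrow> (nat \<Rightarrow> real)) \<Rightarrow> (nat \<Rightarrow> real) \<Rightarrow> real" where
  "margin2 d n ws S w = (MIN i\<in>{..<n}. ystar d ws (S i) * ip d w (S i) / norm2 d w)"

definition max_margin :: "nat \<Rightarrow> nat \<Rightarrow> (nat \<Rightarrow> real) \<Rightarrow> (nat \<Rightarrow> (nat \<Rightarrow> real)) \<Rightarrow> (nat \<Rightarrow> real) \<Rightarrow> bool" where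
  "max_margin d n ws S w \<longleftrightarrow> norm2 d w \<noteq> 0 \<and>
     (\<forall>v. norm2 d v \<noteq> 0 \<longrightarrow> margin2 d n ws S v \<le> margin2 d n ws S w)"

definition test_err :: "nat \<Rightarrow> (nat \<Rightarrow> real) \<Rightarrow> (nat \<Rightarrow> real) \<Rightarrow> real" where
  "test_err d ws w = measure_pmf.prob (DX d) {x. ystar d ws x * ip d w x \<le> 0}"

end

(*
  Replace the 0-1 loss by the ramp loss phi(z) = min 1 (max 0 (1 - sqrt k * z)), which is
  sqrt k-Lipschitz and dominates the 0-1 loss. Since k is odd, |<w*, x>| >= 1 on the cube
  while ||w*|| = sqrt k, so w* has L2-margin at least 1/sqrt k on every sample; hence every
  max-margin w, rescaled to the unit ball, has zero empirical ramp loss, and n times its test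
  error is at most the uniform deviation

    Phi(S) = sup_{||w|| <= 1} (n E_x phi(y*(x) <w, x>) - sum_i phi(y*(x_i) <w, x_i>)).

  Symmetrization, the Ledoux-Talagrand contraction and Cauchy-Schwarz give E Phi <= 2 sqrt(k n d);
  as Phi changes by at most 1 when one sample point changes, McDiarmid's inequality gives
  Phi < E Phi + sqrt(n ln(1/delta) / 2) with probability at least 1 - delta. All expectations
  involved are averages over finite sets, so these tools are proved for uniform distributions on
  finite products.
*)
theory Submission
  imports Defs
begin

section \<open>Suprema of bounded real families\<close>

lemma bounded_sum_comp:
  fixes f :: "'i \<Rightarrow> 'w \<Rightarrow> 'b::real_normed_vector"
  assumes "finite I" "\<And>i. i \<in> I \<Longrightarrow> bounded (f i ` W)"
  shows "bounded ((\<lambda>w. \<Sum>i\<in>I. f i w) ` W)"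
  using assms
proof (induction I rule: finite_induct)
  case empty
  have "(\<lambda>w. 0::'b) ` W \<subseteq> {0}" by auto
  then show ?case by (simp add: bounded_subset[OF finite_imp_bounded[of "{0}"]])
next
  case (insert i I)
  then show ?case by (simp add: bounded_plus_comp)
qed

lemma bounded_cmult_comp:
  fixes f :: "'w \<Rightarrow> real"
  shows "bounded (f ` W) \<Longrightarrow> bounded ((\<lambda>w. c * f w) ` W)"
  using bounded_scaleR_comp[of f W c] by simp

lemma bounded_lipschitz_comp:
  fixes a :: "'w \<Rightarrow> real" and \<psi> :: "real \<Rightarrow> real"
  assumes "bounded (a ` W)" and "L-lipschitz_on UNIV \<psi>"
  shows "bounded ((\<lambda>w. \<psi> (a w)) ` W)"
proof -
  obtain M where M: "\<And>w. w \<in> W \<Longrightarrow> \<bar>a w\<bar> \<le> M"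
    using assms(1) unfolding bounded_real by auto
  have "\<bar>\<psi> (a w)\<bar> \<le> \<bar>\<psi> 0\<bar> + L * M" if "w \<in> W" for w
  proof -
    have "\<bar>\<psi> (a w) - \<psi> 0\<bar> \<le> L * \<bar>a w\<bar>"
      using lipschitz_onD[OF assms(2), of "a w" 0] by (simp add: dist_real_def)
    also have "\<dots> \<le> L * M"
      using M[OF that] lipschitz_on_nonneg[OF assms(2)] by (simp add: mult_left_mono)
    finally show ?thesis by linarith
  qed
  then show ?thesis unfolding bounded_real by blast
qed

lemma cSUP_upper_bounded:
  fixes f :: "'w \<Rightarrow> real"
  shows "w \<in> W \<Longrightarrow> bounded (f ` W) \<Longrightarrow> f w \<le> (SUP w\<in>W. f w)"
  by (rule cSUP_upper) (simp_all add: bounded_imp_bdd_above)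

lemma cSUP_add_le:
  fixes f g :: "'w \<Rightarrow> real"
  assumes "W \<noteq> {}" "bounded (f ` W)" "bounded (g ` W)"
  shows "(SUP w\<in>W. f w + g w) \<le> (SUP w\<in>W. f w) + (SUP w\<in>W. g w)"
  using assms by (intro cSUP_least add_mono cSUP_upper_bounded) auto

lemma cSUP_add_cSUP_le:
  fixes f g :: "'w \<Rightarrow> real"
  assumes "W \<noteq> {}" and "\<And>w w'. w \<in> W \<Longrightarrow> w' \<in> W \<Longrightarrow> f w + g w' \<le> R"
  shows "(SUP w\<in>W. f w) + (SUP w\<in>W. g w) \<le> R"
proof -
  have "(SUP w\<in>W. f w) \<le> R - g w'" if "w' \<in> W" for w'
    using assms that by (intro cSUP_least) (auto simp: algebra_simps)
  then have "(SUP w\<in>W. g w) \<le> R - (SUP w\<in>W. f w)"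
    using assms(1) by (intro cSUP_least) (auto simp: algebra_simps)
  then show ?thesis by linarith
qed

lemma cSUP_le_cSUP_add:
  fixes f g :: "'w \<Rightarrow> real"
  assumes "W \<noteq> {}" "bounded (g ` W)" and "\<And>w. w \<in> W \<Longrightarrow> f w \<le> g w + c"
  shows "(SUP w\<in>W. f w) \<le> (SUP w\<in>W. g w) + c"
proof (rule cSUP_least[OF assms(1)])
  fix w assume "w \<in> W"
  then show "f w \<le> (SUP w\<in>W. g w) + c"
    using assms(2,3) cSUP_upper_bounded[of w W g] by fastforce
qed

lemma abs_cSUP_diff_le:
  fixes f g :: "'w \<Rightarrow> real"
  assumes "W \<noteq> {}" "bounded (f ` W)" "bounded (g ` W)"
    and "\<And>w. w \<in> W \<Longrightarrow> \<bar>f w - g w\<bar> \<le> c"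
  shows "\<bar>(SUP w\<in>W. f w) - (SUP w\<in>W. g w)\<bar> \<le> c"
proof -
  have "(SUP w\<in>W. f w) \<le> (SUP w\<in>W. g w) + c" "(SUP w\<in>W. g w) \<le> (SUP w\<in>W. f w) + c"
    using assms by (intro cSUP_le_cSUP_add; force)+
  then show ?thesis by linarith
qed

section \<open>Finite products of a finite set\<close>

lemma sum_PiE_dflt_insert:
  assumes "i \<notin> I"
  shows "(\<Sum>S\<in>PiE_dflt (insert i I) dd (\<lambda>_. A). g S) =
         (\<Sum>S\<in>PiE_dflt I dd (\<lambda>_. A). \<Sum>a\<in>A. g (S(i := a)))"
proof -
  let ?P = "PiE_dflt I dd (\<lambda>_. A)"
  let ?upd = "\<lambda>(S, a). S(i := a)"
  have "bij_betw ?upd (?P \<times> A) (PiE_dflt (insert i I) dd (\<lambda>_. A))"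
  proof (rule bij_betw_byWitness[where f' = "\<lambda>S. (S(i := dd), S i)"])
    show "\<forall>p\<in>?P \<times> A. (\<lambda>S. (S(i := dd), S i)) (?upd p) = p"
      using assms by (auto simp: PiE_dflt_def fun_eq_iff)
  qed (use assms in \<open>auto simp: PiE_dflt_def\<close>)
  then have "(\<Sum>S\<in>PiE_dflt (insert i I) dd (\<lambda>_. A). g S) = (\<Sum>p\<in>?P \<times> A. g (?upd p))"
    by (simp add: sum.reindex_bij_betw)
  then show ?thesis
    by (simp add: sum.cartesian_product case_prod_unfold)
qed

lemma card_PiE_dflt_const:
  "finite I \<Longrightarrow> finite A \<Longrightarrow> card (PiE_dflt I dd (\<lambda>_. A)) = card A ^ card I"
  using card_PiE_dflt[of I "\<lambda>_. A" dd] by simp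

lemma sum_PiE_dflt_coordinate:
  fixes g :: "'a \<Rightarrow> real"
  assumes "finite I" "i \<in> I" "finite A"
  shows "(\<Sum>T\<in>PiE_dflt I dd (\<lambda>_. A). g (T i)) * card A
       = card (PiE_dflt I dd (\<lambda>_. A)) * (\<Sum>a\<in>A. g a)"
proof -
  have I: "I = insert i (I - {i})" using assms(2) by auto
  have "(\<Sum>T\<in>PiE_dflt I dd (\<lambda>_. A). g (T i))
      = card (PiE_dflt (I - {i}) dd (\<lambda>_. A)) * (\<Sum>a\<in>A. g a)"
    by (subst I, subst sum_PiE_dflt_insert) auto
  moreover have "card (PiE_dflt I dd (\<lambda>_. A)) = card (PiE_dflt (I - {i}) dd (\<lambda>_. A)) * card A"
  proof -
    have "card I = Suc (card (I - {i}))" using assms card_Suc_Diff1 by metis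
    then show ?thesis using assms by (metis card_PiE_dflt_const finite_Diff power_Suc2)
  qed
  ultimately show ?thesis by (simp add: algebra_simps)
qed

section \<open>McDiarmid's inequality on a finite product\<close>

lemma Hoeffdings_lemma_finite_uniform:
  fixes F :: "'a \<Rightarrow> real"
  assumes A: "finite A" "A \<noteq> {}" and l: "l > 0"
    and oscillation: "\<And>a a'. a \<in> A \<Longrightarrow> a' \<in> A \<Longrightarrow> F a - F a' \<le> c"
  shows "(\<Sum>a\<in>A. exp (l * (F a - (\<Sum>b\<in>A. F b) / card A))) \<le> card A * exp (l\<^sup>2 * c\<^sup>2 / 8)"
proof -
  let ?p = "pmf_of_set A"
  define X where "X a = F a - (\<Sum>b\<in>A. F b) / card A" for a
  obtain a0 where a0: "a0 \<in> A" "\<And>a. a \<in> A \<Longrightarrow> X a0 \<le> X a"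
    using ex_is_arg_min_if_finite[OF A, of X] by (auto simp: is_arg_min_linorder)
  have range: "X a0 \<le> X a \<and> X a \<le> X a0 + c" if "a \<in> A" for a
    using a0 oscillation[OF that a0(1)] that by (simp add: X_def)
  interpret interval_bounded_random_variable "measure_pmf ?p" X "X a0" "X a0 + c"
    by unfold_locales (use A range in \<open>auto simp: AE_measure_pmf_iff\<close>)
  have "measure_pmf.expectation ?p X = 0"
    using A by (simp add: integral_pmf_of_set X_def sum_subtractf)
  then have "(\<integral>\<^sup>+x. exp (l * X x) \<partial>?p) \<le> ennreal (exp (l\<^sup>2 * c\<^sup>2 / 8))"
    using Hoeffdings_lemma_nn_integral_0[OF l] by simp
  moreover have "(\<integral>\<^sup>+x. exp (l * X x) \<partial>?p) = ennreal ((\<Sum>a\<in>A. exp (l * X a)) / card A)"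
  proof -
    have "integrable ?p (\<lambda>x. exp (l * X x))"
      using A by (intro integrable_measure_pmf_finite) auto
    then have "(\<integral>\<^sup>+x. exp (l * X x) \<partial>?p) = ennreal (\<integral>x. exp (l * X x) \<partial>?p)"
      by (intro nn_integral_eq_integral) auto
    then show ?thesis
      using A by (simp add: integral_pmf_of_set)
  qed
  ultimately have "(\<Sum>a\<in>A. exp (l * X a)) / card A \<le> exp (l\<^sup>2 * c\<^sup>2 / 8)"
    by simp
  then show ?thesis
    using A by (simp add: X_def divide_le_eq card_gt_0_iff mult.commute)
qed

lemma bounded_differences_coordinate_average:
  fixes f :: "('i \<Rightarrow> 'a) \<Rightarrow> real"
  assumes "i \<notin> I" and A: "finite A" "A \<noteq> {}"
    and bounded_diff: "\<And>S j a. S \<in> PiE_dflt (insert i I) dd (\<lambda>_. A) \<Longrightarrow> j \<in> insert i I \<Longrightarrow> a \<in> A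
                          \<Longrightarrow> \<bar>f S - f (S(j := a))\<bar> \<le> c"
    and S: "S \<in> PiE_dflt I dd (\<lambda>_. A)" and "j \<in> I" "b \<in> A"
  shows "\<bar>(\<Sum>a\<in>A. f (S(i := a))) / card A - (\<Sum>a\<in>A. f ((S(j := b))(i := a))) / card A\<bar> \<le> c"
proof -
  have "i \<noteq> j" using assms by auto
  then have "(\<Sum>a\<in>A. f (S(i := a))) / card A - (\<Sum>a\<in>A. f ((S(j := b))(i := a))) / card A
      = (\<Sum>a\<in>A. f (S(i := a)) - f ((S(i := a))(j := b))) / card A"
    by (simp add: sum_subtractf diff_divide_distrib fun_upd_twist)
  also have "\<bar>\<dots>\<bar> \<le> (\<Sum>a\<in>A. \<bar>f (S(i := a)) - f ((S(i := a))(j := b))\<bar>) / card A"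
    by (simp add: divide_right_mono sum_abs)
  also have "\<dots> \<le> (\<Sum>a\<in>A. c) / card A"
  proof (intro divide_right_mono sum_mono)
    fix a assume "a \<in> A"
    then have "S(i := a) \<in> PiE_dflt (insert i I) dd (\<lambda>_. A)"
      using S by (auto simp: PiE_dflt_def)
    then show "\<bar>f (S(i := a)) - f ((S(i := a))(j := b))\<bar> \<le> c"
      using bounded_diff assms(6,7) by blast
  qed simp
  finally show ?thesis using A by simp
qed

lemma McDiarmid_mgf_uniform_product:
  fixes f :: "('i \<Rightarrow> 'a) \<Rightarrow> real" and c l :: real
  assumes "finite I" and A: "finite A" "A \<noteq> {}" and l: "l > 0"
    and "\<And>S i a. S \<in> PiE_dflt I dd (\<lambda>_. A) \<Longrightarrow> i \<in> I \<Longrightarrow> a \<in> A \<Longrightarrow> \<bar>f S - f (S(i := a))\<bar> \<le> c"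
  shows "(\<Sum>S\<in>PiE_dflt I dd (\<lambda>_. A).
            exp (l * (f S - (\<Sum>T\<in>PiE_dflt I dd (\<lambda>_. A). f T) / card (PiE_dflt I dd (\<lambda>_. A)))))
         \<le> card (PiE_dflt I dd (\<lambda>_. A)) * exp (l\<^sup>2 * c\<^sup>2 * card I / 8)"
  using assms(1,5)
proof (induction I arbitrary: f rule: finite_induct)
  case empty
  have "PiE_dflt ({} :: 'i set) dd (\<lambda>_. A) = {\<lambda>_. dd}" by (auto simp: PiE_dflt_def)
  then show ?case by simp
next
  case (insert i I)
  define P where "P = PiE_dflt I dd (\<lambda>_. A)"
  define P' where "P' = PiE_dflt (insert i I) dd (\<lambda>_. A)"
  text \<open>Average out coordinate \<open>i\<close>: the induction hypothesis applies to the average \<open>g\<close>, and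
    Hoeffding's lemma to \<open>f - g\<close> as a function of coordinate \<open>i\<close>.\<close>
  define g where "g S = (\<Sum>a\<in>A. f (S(i := a))) / card A" for S
  define \<mu> where "\<mu> = (\<Sum>T\<in>P. g T) / card P"
  have cA: "card A > 0" using A by (simp add: card_gt_0_iff)
  have cP: "card P > 0" using insert.hyps A by (auto simp: P_def card_gt_0_iff)
  have cP': "card P' = card P * card A"
    using insert.hyps A by (simp add: P_def P'_def card_PiE_dflt_const)
  have sum_P': "(\<Sum>S\<in>P'. h S) = (\<Sum>S\<in>P. \<Sum>a\<in>A. h (S(i := a)))" for h
    unfolding P_def P'_def using insert.hyps(2) by (rule sum_PiE_dflt_insert)
  have mean: "(\<Sum>T\<in>P'. f T) / card P' = \<mu>"
  proof -
    have "(\<Sum>T\<in>P'. f T) = (\<Sum>T\<in>P. g T) * card A"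
      unfolding sum_P' g_def sum_distrib_right using cA by (intro sum.cong) auto
    then show ?thesis using cA cP by (simp add: \<mu>_def cP')
  qed
  have IH: "(\<Sum>S\<in>P. exp (l * (g S - \<mu>))) \<le> card P * exp (l\<^sup>2 * c\<^sup>2 * card I / 8)"
    unfolding P_def \<mu>_def g_def using insert.hyps A insert.prems
    by (intro insert.IH) (rule bounded_differences_coordinate_average)
  have Hoeffding: "(\<Sum>a\<in>A. exp (l * (f (S(i := a)) - g S))) \<le> card A * exp (l\<^sup>2 * c\<^sup>2 / 8)"
    if S: "S \<in> P" for S
    unfolding g_def
  proof (rule Hoeffdings_lemma_finite_uniform[OF A l])
    fix a a' assume "a \<in> A" "a' \<in> A"
    moreover have "S(i := a) \<in> P'" using S \<open>a \<in> A\<close> by (auto simp: P_def P'_def PiE_dflt_def)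
    ultimately have "\<bar>f (S(i := a)) - f ((S(i := a))(i := a'))\<bar> \<le> c"
      using insert.prems unfolding P'_def by blast
    then show "f (S(i := a)) - f (S(i := a')) \<le> c" by simp
  qed
  have "(\<Sum>S\<in>P'. exp (l * (f S - \<mu>)))
      = (\<Sum>S\<in>P. exp (l * (g S - \<mu>)) * (\<Sum>a\<in>A. exp (l * (f (S(i := a)) - g S))))"
    by (simp add: sum_P' sum_distrib_left algebra_simps flip: exp_add)
  also have "\<dots> \<le> (\<Sum>S\<in>P. exp (l * (g S - \<mu>)) * (card A * exp (l\<^sup>2 * c\<^sup>2 / 8)))"
    by (intro sum_mono mult_left_mono Hoeffding) auto
  also have "\<dots> \<le> card P * exp (l\<^sup>2 * c\<^sup>2 * card I / 8) * (card A * exp (l\<^sup>2 * c\<^sup>2 / 8))"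
    by (simp add: IH mult_right_mono flip: sum_distrib_right)
  also have "\<dots> = card P' * exp (l\<^sup>2 * c\<^sup>2 * card (insert i I) / 8)"
    using insert.hyps by (simp add: cP' field_simps flip: exp_add)
  finally show ?case unfolding P'_def[symmetric] mean .
qed

theorem McDiarmid_inequality_uniform_product:
  fixes I :: "'i set" and A :: "'a set" and dd :: 'a and f :: "('i \<Rightarrow> 'a) \<Rightarrow> real" and c t :: real
  defines "P \<equiv> PiE_dflt I dd (\<lambda>_. A)"
  assumes I: "finite I" and A: "finite A" "A \<noteq> {}" and c: "c > 0" and t: "t > 0"
    and bounded_diff: "\<And>S i a. S \<in> P \<Longrightarrow> i \<in> I \<Longrightarrow> a \<in> A \<Longrightarrow> \<bar>f S - f (S(i := a))\<bar> \<le> c"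
  shows "measure_pmf.prob (pmf_of_set P) {S. (\<Sum>T\<in>P. f T) / card P + t \<le> f S}
         \<le> exp (- 2 * t\<^sup>2 / (card I * c\<^sup>2))"
proof (cases "I = {}")
  case True
  then show ?thesis by simp
next
  case False
  define \<mu> where "\<mu> = (\<Sum>T\<in>P. f T) / card P"
  define l where "l = 4 * t / (card I * c\<^sup>2)"
  define Bad where "Bad = {S \<in> P. \<mu> + t \<le> f S}"
  have finP: "finite P" and cP: "card P > 0"
    using I A by (auto simp: P_def card_gt_0_iff)
  have cI: "card I > 0" using I False by (simp add: card_gt_0_iff)
  have l: "l > 0" using cI c t by (simp add: l_def)
  have "card Bad * exp (l * t) = (\<Sum>S\<in>Bad. exp (l * t))" by simp
  also have "\<dots> \<le> (\<Sum>S\<in>Bad. exp (l * (f S - \<mu>)))"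
    using l by (intro sum_mono) (auto simp: Bad_def)
  also have "\<dots> \<le> (\<Sum>S\<in>P. exp (l * (f S - \<mu>)))"
    using finP by (intro sum_mono2) (auto simp: Bad_def)
  also have "\<dots> \<le> card P * exp (l\<^sup>2 * c\<^sup>2 * card I / 8)"
    unfolding \<mu>_def P_def using I A l bounded_diff[unfolded P_def]
    by (rule McDiarmid_mgf_uniform_product)
  finally have "card Bad / card P \<le> exp (l\<^sup>2 * c\<^sup>2 * card I / 8) / exp (l * t)"
    using cP by (simp add: field_simps)
  also have "\<dots> = exp (l\<^sup>2 * c\<^sup>2 * card I / 8 - l * t)"
    by (simp add: exp_diff)
  also have "l\<^sup>2 * c\<^sup>2 * card I / 8 - l * t = - 2 * t\<^sup>2 / (card I * c\<^sup>2)"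
    using cI c by (simp add: l_def power2_eq_square field_simps)
  finally show ?thesis
    using finP A by (simp add: measure_pmf_of_set P_def Bad_def \<mu>_def Int_def conj_commute)
qed

section \<open>Rademacher averages\<close>

abbreviation sign_vectors :: "'i set \<Rightarrow> ('i \<Rightarrow> real) set" where
  "sign_vectors I \<equiv> PiE_dflt I 0 (\<lambda>_. {-1, 1})"

text \<open>\<open>E\<^sub>\<sigma> sup\<^sub>w \<Sum>\<^sub>i \<sigma>\<^sub>i F w i\<close> for uniform random signs: \<open>card I\<close> times the empirical Rademacher
  complexity of the class \<open>{F w | w \<in> W}\<close>.\<close>
definition rademacher_average :: "'i set \<Rightarrow> 'w set \<Rightarrow> ('w \<Rightarrow> 'i \<Rightarrow> real) \<Rightarrow> real" where
  "rademacher_average I W F =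
     (\<Sum>\<sigma>\<in>sign_vectors I. SUP w\<in>W. \<Sum>i\<in>I. \<sigma> i * F w i) / card (sign_vectors I)"

lemma card_sign_vectors_pos: "finite I \<Longrightarrow> card (sign_vectors I) > 0"
  by (auto simp: card_gt_0_iff)

lemma contraction_single_sign:
  fixes B a :: "'w \<Rightarrow> real" and \<psi> :: "real \<Rightarrow> real"
  assumes W: "W \<noteq> {}" and B: "bounded (B ` W)" and a: "bounded (a ` W)"
    and lip: "L-lipschitz_on UNIV \<psi>"
  shows "(SUP w\<in>W. B w + \<psi> (a w)) + (SUP w\<in>W. B w - \<psi> (a w))
       \<le> (SUP w\<in>W. B w + L * a w) + (SUP w\<in>W. B w - L * a w)"
proof (rule cSUP_add_cSUP_le[OF W])
  fix w w' assume w: "w \<in> W" and w': "w' \<in> W"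
  have bounded_plus: "bounded ((\<lambda>w. B w + L * a w) ` W)"
    and bounded_minus: "bounded ((\<lambda>w. B w - L * a w) ` W)"
    using B a by (simp_all add: bounded_plus_comp bounded_minus_comp bounded_cmult_comp)
  have "\<psi> (a w) - \<psi> (a w') \<le> L * \<bar>a w - a w'\<bar>"
    using lipschitz_onD[OF lip, of "a w" "a w'"] by (simp add: dist_real_def)
  text \<open>Pair \<open>w\<close> and \<open>w'\<close> with the two suprema on the right according to the sign of \<open>a w - a w'\<close>.\<close>
  then consider "B w + \<psi> (a w) + (B w' - \<psi> (a w')) \<le> (B w + L * a w) + (B w' - L * a w')"
    | "B w + \<psi> (a w) + (B w' - \<psi> (a w')) \<le> (B w' + L * a w') + (B w - L * a w)"
    by (cases "a w' \<le> a w") (auto simp: abs_if algebra_simps)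
  then show "B w + \<psi> (a w) + (B w' - \<psi> (a w'))
      \<le> (SUP w\<in>W. B w + L * a w) + (SUP w\<in>W. B w - L * a w)"
  proof cases
    case 1
    then show ?thesis
      using cSUP_upper_bounded[OF w bounded_plus] cSUP_upper_bounded[OF w' bounded_minus] by linarith
  next
    case 2
    then show ?thesis
      using cSUP_upper_bounded[OF w' bounded_plus] cSUP_upper_bounded[OF w bounded_minus] by linarith
  qed
qed

text \<open>The offset \<open>B\<close> is what lets the induction over the coordinates go through.\<close>
lemma contraction_with_offset:
  fixes B :: "'w \<Rightarrow> real" and a :: "'w \<Rightarrow> 'i \<Rightarrow> real" and \<psi> :: "'i \<Rightarrow> real \<Rightarrow> real"
  assumes "finite I" and W: "W \<noteq> {}" and "bounded (B ` W)"
    and "\<And>i. i \<in> I \<Longrightarrow> bounded ((\<lambda>w. a w i) ` W)"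
    and "\<And>i. i \<in> I \<Longrightarrow> L-lipschitz_on UNIV (\<psi> i)"
  shows "(\<Sum>\<sigma>\<in>sign_vectors I. SUP w\<in>W. B w + (\<Sum>i\<in>I. \<sigma> i * \<psi> i (a w i)))
       \<le> (\<Sum>\<sigma>\<in>sign_vectors I. SUP w\<in>W. B w + (\<Sum>i\<in>I. \<sigma> i * (L * a w i)))"
  using assms(1,3-5)
proof (induction I arbitrary: B rule: finite_induct)
  case empty
  then show ?case by simp
next
  case (insert j I)
  note B = insert.prems(1) and a = insert.prems(2) and lip = insert.prems(3)
  define \<Psi> where "\<Psi> \<sigma> w = (\<Sum>i\<in>I. \<sigma> i * \<psi> i (a w i))" for \<sigma> w
  define \<Lambda> where "\<Lambda> \<sigma> w = (\<Sum>i\<in>I. \<sigma> i * (L * a w i))" for \<sigma> w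
  have split: "(\<Sum>i\<in>insert j I. (\<sigma>(j := s)) i * h i) = s * h j + (\<Sum>i\<in>I. \<sigma> i * h i)"
    for \<sigma> s and h :: "'i \<Rightarrow> real"
  proof -
    have "(\<Sum>i\<in>I. (\<sigma>(j := s)) i * h i) = (\<Sum>i\<in>I. \<sigma> i * h i)"
      using insert.hyps by (intro sum.cong) auto
    then show ?thesis using insert.hyps by simp
  qed
  have "bounded ((\<lambda>w. \<psi> i (a w i)) ` W)" if "i \<in> I" for i
    using bounded_lipschitz_comp[OF a lip] that by simp
  then have bounded_\<Psi>: "bounded ((\<lambda>w. B w + \<Psi> \<sigma> w) ` W)" for \<sigma>
    unfolding \<Psi>_def using insert.hyps B by (intro bounded_plus_comp bounded_sum_comp bounded_cmult_comp)
  have "(\<Sum>\<sigma>\<in>sign_vectors (insert j I). SUP w\<in>W. B w + (\<Sum>i\<in>insert j I. \<sigma> i * \<psi> i (a w i)))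
      = (\<Sum>\<sigma>\<in>sign_vectors I. (SUP w\<in>W. (B w + \<Psi> \<sigma> w) + \<psi> j (a w j))
                                + (SUP w\<in>W. (B w + \<Psi> \<sigma> w) - \<psi> j (a w j)))"
    by (subst sum_PiE_dflt_insert[OF insert.hyps(2)], simp only: split) (simp add: \<Psi>_def algebra_simps)
  also have "\<dots> \<le> (\<Sum>\<sigma>\<in>sign_vectors I. (SUP w\<in>W. (B w + \<Psi> \<sigma> w) + L * a w j)
                                + (SUP w\<in>W. (B w + \<Psi> \<sigma> w) - L * a w j))"
    using a lip by (intro sum_mono contraction_single_sign[OF W bounded_\<Psi>]) auto
  also have "\<dots> = (\<Sum>\<sigma>\<in>sign_vectors I. SUP w\<in>W. (B w + L * a w j) + \<Psi> \<sigma> w)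
                + (\<Sum>\<sigma>\<in>sign_vectors I. SUP w\<in>W. (B w - L * a w j) + \<Psi> \<sigma> w)"
    by (simp add: sum.distrib algebra_simps)
  also have "\<dots> \<le> (\<Sum>\<sigma>\<in>sign_vectors I. SUP w\<in>W. (B w + L * a w j) + \<Lambda> \<sigma> w)
                + (\<Sum>\<sigma>\<in>sign_vectors I. SUP w\<in>W. (B w - L * a w j) + \<Lambda> \<sigma> w)"
    unfolding \<Psi>_def \<Lambda>_def using B a lip
    by (intro add_mono insert.IH bounded_plus_comp bounded_minus_comp bounded_cmult_comp) auto
  also have "\<dots> = (\<Sum>\<sigma>\<in>sign_vectors (insert j I). SUP w\<in>W. B w + (\<Sum>i\<in>insert j I. \<sigma> i * (L * a w i)))"
    by (subst sum_PiE_dflt_insert[OF insert.hyps(2)], simp only: split) (simp add: \<Lambda>_def sum.distrib algebra_simps)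
  finally show ?case .
qed

lemma rademacher_average_contraction:
  fixes a :: "'w \<Rightarrow> 'i \<Rightarrow> real" and \<psi> :: "'i \<Rightarrow> real \<Rightarrow> real"
  assumes "finite I" and "W \<noteq> {}" and "\<And>i. i \<in> I \<Longrightarrow> bounded ((\<lambda>w. a w i) ` W)"
    and "\<And>i. i \<in> I \<Longrightarrow> L-lipschitz_on UNIV (\<psi> i)"
  shows "rademacher_average I W (\<lambda>w i. \<psi> i (a w i)) \<le> rademacher_average I W (\<lambda>w i. L * a w i)"
proof -
  have "bounded ((\<lambda>w. 0::real) ` W)"
    by (rule bounded_subset[OF finite_imp_bounded[of "{0}"]]) auto
  then show ?thesis
    using contraction_with_offset[OF assms(1,2) _ assms(3,4), of "\<lambda>_. 0"]
    unfolding rademacher_average_def by (simp add: divide_right_mono)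
qed

lemma sum_sign_vectors_mult:
  assumes "i \<in> I" "i' \<in> I"
  shows "(\<Sum>\<sigma>\<in>sign_vectors I. \<sigma> i * \<sigma> i') = (if i = i' then card (sign_vectors I) else 0)"
proof (cases "i = i'")
  case True
  have "(\<Sum>\<sigma>\<in>sign_vectors I. \<sigma> i * \<sigma> i') = (\<Sum>\<sigma>\<in>sign_vectors I. 1)"
    using assms True by (intro sum.cong) (auto simp: PiE_dflt_def)
  then show ?thesis using True by simp
next
  case False
  let ?flip = "\<lambda>\<sigma>::'a \<Rightarrow> real. \<sigma>(i := - \<sigma> i)"
  have "(\<Sum>\<sigma>\<in>sign_vectors I. \<sigma> i * \<sigma> i') = (\<Sum>\<sigma>\<in>sign_vectors I. - (\<sigma> i * \<sigma> i'))"
    by (rule sum.reindex_bij_witness[of _ ?flip ?flip])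
      (use assms False in \<open>auto simp: PiE_dflt_def\<close>)
  then show ?thesis using False by (simp add: sum_negf)
qed

lemma sum_sign_vectors_square:
  fixes c :: "'i \<Rightarrow> real"
  assumes "finite I"
  shows "(\<Sum>\<sigma>\<in>sign_vectors I. (\<Sum>i\<in>I. \<sigma> i * c i)\<^sup>2) = card (sign_vectors I) * (\<Sum>i\<in>I. (c i)\<^sup>2)"
proof -
  have "(\<Sum>\<sigma>\<in>sign_vectors I. (\<Sum>i\<in>I. \<sigma> i * c i)\<^sup>2)
      = (\<Sum>\<sigma>\<in>sign_vectors I. \<Sum>i\<in>I. \<Sum>i'\<in>I. (\<sigma> i * \<sigma> i') * (c i * c i'))"
    by (simp add: power2_eq_square sum_product algebra_simps)
  also have "\<dots> = (\<Sum>i\<in>I. \<Sum>i'\<in>I. (\<Sum>\<sigma>\<in>sign_vectors I. \<sigma> i * \<sigma> i') * (c i * c i'))"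
    by (simp add: sum.swap[of _ "sign_vectors I"] sum_distrib_right)
  also have "\<dots> = (\<Sum>i\<in>I. \<Sum>i'\<in>I. (if i = i' then card (sign_vectors I) * (c i * c i') else 0))"
    by (intro sum.cong refl) (simp add: sum_sign_vectors_mult)
  also have "\<dots> = (\<Sum>i\<in>I. card (sign_vectors I) * (c i)\<^sup>2)"
    using assms by (simp add: sum.delta power2_eq_square)
  finally show ?thesis by (simp add: sum_distrib_left)
qed

lemma norm2_eq_L2_set: "norm2 d w = L2_set w {..<d}"
  by (simp add: norm2_def L2_set_def)

lemma abs_ip_le_norm2_mult: "\<bar>ip d w x\<bar> \<le> norm2 d w * norm2 d x"
proof -
  have "\<bar>ip d w x\<bar> \<le> (\<Sum>j<d. \<bar>w j\<bar> * \<bar>x j\<bar>)"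
    unfolding ip_def by (rule order.trans[OF sum_abs]) (simp add: abs_mult)
  also have "\<dots> \<le> norm2 d w * norm2 d x"
    unfolding norm2_eq_L2_set by (rule L2_set_mult_ineq)
  finally show ?thesis .
qed

abbreviation unit_ball :: "nat \<Rightarrow> (nat \<Rightarrow> real) set" where
  "unit_ball d \<equiv> {w. norm2 d w \<le> 1}"

lemma zero_in_unit_ball: "(\<lambda>_. 0) \<in> unit_ball d"
  by (simp add: norm2_def)

lemma bounded_ip_unit_ball: "bounded ((\<lambda>w. ip d w x) ` unit_ball d)"
proof -
  have "\<bar>ip d w x\<bar> \<le> norm2 d x" if "w \<in> unit_ball d" for w
  proof -
    have "norm2 d w * norm2 d x \<le> 1 * norm2 d x"
      using that by (intro mult_right_mono) (auto simp: norm2_def intro: sum_nonneg)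
    then show ?thesis using abs_ip_le_norm2_mult[of d w x] by simp
  qed
  then show ?thesis unfolding bounded_real by blast
qed

lemma cSUP_ip_unit_ball_le: "(SUP w\<in>unit_ball d. ip d w v) \<le> norm2 d v"
proof (rule cSUP_least)
  show "unit_ball d \<noteq> {}" using zero_in_unit_ball by blast
  fix w assume w: "w \<in> unit_ball d"
  have "ip d w v \<le> norm2 d w * norm2 d v" by (rule abs_le_D1[OF abs_ip_le_norm2_mult])
  also have "\<dots> \<le> norm2 d v"
    using w by (intro mult_left_le_one_le) (auto simp: norm2_def intro: sum_nonneg)
  finally show "ip d w v \<le> norm2 d v" .
qed

lemma rademacher_average_linear:
  fixes z :: "'i \<Rightarrow> nat \<Rightarrow> real"
  assumes I: "finite I"
  shows "rademacher_average I (unit_ball d) (\<lambda>w i. ip d w (z i))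
         \<le> sqrt (\<Sum>i\<in>I. \<Sum>j<d. (z i j)\<^sup>2)"
proof -
  let ?\<Sigma> = "sign_vectors I"
  define v where "v \<sigma> j = (\<Sum>i\<in>I. \<sigma> i * z i j)" for \<sigma> j
  define Q where "Q \<sigma> = (\<Sum>j<d. (v \<sigma> j)\<^sup>2)" for \<sigma>
  have Q_nonneg: "Q \<sigma> \<ge> 0" for \<sigma> unfolding Q_def by (intro sum_nonneg) auto
  have "(\<Sum>\<sigma>\<in>?\<Sigma>. SUP w\<in>unit_ball d. \<Sum>i\<in>I. \<sigma> i * ip d w (z i))
      = (\<Sum>\<sigma>\<in>?\<Sigma>. SUP w\<in>unit_ball d. ip d w (v \<sigma>))"
    by (simp add: ip_def v_def sum_distrib_left sum.swap[of _ I] algebra_simps)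
  also have "\<dots> \<le> (\<Sum>\<sigma>\<in>?\<Sigma>. sqrt (Q \<sigma>))"
    using cSUP_ip_unit_ball_le by (intro sum_mono) (simp add: norm2_def Q_def)
  also have "\<dots> \<le> L2_set (\<lambda>_. 1) ?\<Sigma> * L2_set (\<lambda>\<sigma>. sqrt (Q \<sigma>)) ?\<Sigma>"
    using L2_set_mult_ineq[where f = "\<lambda>_. 1" and g = "\<lambda>\<sigma>. sqrt (Q \<sigma>)" and A = ?\<Sigma>] by (simp add: Q_nonneg)
  also have "\<dots> = sqrt (card ?\<Sigma>) * sqrt (\<Sum>\<sigma>\<in>?\<Sigma>. Q \<sigma>)"
    by (simp add: L2_set_def Q_nonneg)
  also have "(\<Sum>\<sigma>\<in>?\<Sigma>. Q \<sigma>) = (\<Sum>j<d. \<Sum>\<sigma>\<in>?\<Sigma>. (\<Sum>i\<in>I. \<sigma> i * z i j)\<^sup>2)"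
    unfolding Q_def v_def by (rule sum.swap)
  also have "\<dots> = card ?\<Sigma> * (\<Sum>i\<in>I. \<Sum>j<d. (z i j)\<^sup>2)"
    using I by (simp add: sum_sign_vectors_square sum_distrib_left sum.swap[of _ "{..<d}"])
  also have "sqrt (card ?\<Sigma>) * sqrt (card ?\<Sigma> * (\<Sum>i\<in>I. \<Sum>j<d. (z i j)\<^sup>2))
           = card ?\<Sigma> * sqrt (\<Sum>i\<in>I. \<Sum>j<d. (z i j)\<^sup>2)"
    by (simp add: real_sqrt_mult)
  finally show ?thesis
    unfolding rademacher_average_def using card_sign_vectors_pos[OF I]
    by (simp add: divide_le_eq mult.commute)
qed

section \<open>Symmetrization\<close>

lemma sum_sign_vectors_uminus:
  "(\<Sum>\<sigma>\<in>sign_vectors I. F (\<lambda>i. - \<sigma> i)) = (\<Sum>\<sigma>\<in>sign_vectors I. F \<sigma>)"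
  by (rule sum.reindex_bij_witness[of _ "\<lambda>\<sigma> i. - \<sigma> i" "\<lambda>\<sigma> i. - \<sigma> i"])
    (auto simp: PiE_dflt_def)

lemma sum_PiE_dflt_swap_coordinates:
  fixes I :: "'i set" and A :: "'a set" and dd :: 'a and D :: "('i \<Rightarrow> 'a) \<Rightarrow> ('i \<Rightarrow> 'a) \<Rightarrow> real"
  defines "P \<equiv> PiE_dflt I dd (\<lambda>_. A)"
  shows "(\<Sum>S\<in>P. \<Sum>T\<in>P. D S T)
       = (\<Sum>S\<in>P. \<Sum>T\<in>P. D (\<lambda>i. if i \<in> J then T i else S i) (\<lambda>i. if i \<in> J then S i else T i))"
proof -
  let ?swap = "\<lambda>(S, T). ((\<lambda>i. if i \<in> J then T i else S i), (\<lambda>i. if i \<in> J then S i else T i))"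
  have involution: "?swap (?swap p) = p" for p
    by (cases p) (auto simp: fun_eq_iff)
  have swap_in: "?swap p \<in> P \<times> P" if "p \<in> P \<times> P" for p
    using that by (auto simp: P_def PiE_dflt_def case_prod_unfold)
  have "(\<Sum>p\<in>P \<times> P. case_prod D p) = (\<Sum>p\<in>P \<times> P. case_prod D (?swap p))"
    by (rule sum.reindex_bij_witness[of _ ?swap ?swap]) (simp_all only: involution swap_in)
  then show ?thesis by (simp add: sum.cartesian_product case_prod_unfold)
qed

text \<open>Swapping \<open>S i\<close> and \<open>T i\<close> wherever \<open>\<sigma> i = -1\<close> preserves the uniform distribution on pairs.\<close>
lemma ghost_sample_sign_swap:
  fixes I :: "'i set" and A :: "'a set" and dd :: 'a and g :: "'w \<Rightarrow> 'a \<Rightarrow> real"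
  defines "P \<equiv> PiE_dflt I dd (\<lambda>_. A)"
  assumes I: "finite I" and W: "W \<noteq> {}" and bounded_g: "\<And>a. bounded ((\<lambda>w. g w a) ` W)"
    and \<sigma>: "\<sigma> \<in> sign_vectors I"
  shows "(\<Sum>S\<in>P. \<Sum>T\<in>P. SUP w\<in>W. \<Sum>i\<in>I. g w (T i) - g w (S i))
         \<le> card P * (\<Sum>S\<in>P. SUP w\<in>W. \<Sum>i\<in>I. \<sigma> i * g w (S i))
           + card P * (\<Sum>S\<in>P. SUP w\<in>W. \<Sum>i\<in>I. - \<sigma> i * g w (S i))"
proof -
  define R where "R \<tau> S = (SUP w\<in>W. \<Sum>i\<in>I. \<tau> i * g w (S i))" for \<tau> S
  have bounded_sum: "bounded ((\<lambda>w. \<Sum>i\<in>I. \<tau> i * g w (S i)) ` W)" for \<tau> S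
    using I bounded_g by (intro bounded_sum_comp bounded_cmult_comp)
  have "(\<Sum>S\<in>P. \<Sum>T\<in>P. SUP w\<in>W. \<Sum>i\<in>I. g w (T i) - g w (S i))
      = (\<Sum>S\<in>P. \<Sum>T\<in>P. SUP w\<in>W. \<Sum>i\<in>I.
            g w (if i \<in> {i. \<sigma> i \<noteq> 1} then S i else T i) - g w (if i \<in> {i. \<sigma> i \<noteq> 1} then T i else S i))"
    unfolding P_def by (rule sum_PiE_dflt_swap_coordinates)
  also have "\<dots> = (\<Sum>S\<in>P. \<Sum>T\<in>P. SUP w\<in>W. (\<Sum>i\<in>I. \<sigma> i * g w (T i)) + (\<Sum>i\<in>I. - \<sigma> i * g w (S i)))"
  proof (intro sum.cong refl SUP_cong)
    fix S T w
    have "g w (if \<sigma> i \<noteq> 1 then S i else T i) - g w (if \<sigma> i \<noteq> 1 then T i else S i)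
        = \<sigma> i * g w (T i) + - \<sigma> i * g w (S i)" if "i \<in> I" for i
      using \<sigma> that by (auto simp: PiE_dflt_def)
    then show "(\<Sum>i\<in>I. g w (if i \<in> {i. \<sigma> i \<noteq> 1} then S i else T i)
                     - g w (if i \<in> {i. \<sigma> i \<noteq> 1} then T i else S i))
        = (\<Sum>i\<in>I. \<sigma> i * g w (T i)) + (\<Sum>i\<in>I. - \<sigma> i * g w (S i))"
      by (simp add: sum.distrib[symmetric])
  qed
  also have "\<dots> \<le> (\<Sum>S\<in>P. \<Sum>T\<in>P. R \<sigma> T + R (\<lambda>i. - \<sigma> i) S)"
    unfolding R_def by (intro sum_mono cSUP_add_le W bounded_sum)
  also have "\<dots> = card P * (\<Sum>S\<in>P. R \<sigma> S) + card P * (\<Sum>S\<in>P. R (\<lambda>i. - \<sigma> i) S)"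
    by (simp add: sum.distrib sum_distrib_left)
  finally show ?thesis by (simp add: R_def)
qed

lemma ghost_sample_symmetrization:
  fixes I :: "'i set" and A :: "'a set" and dd :: 'a and g :: "'w \<Rightarrow> 'a \<Rightarrow> real"
  defines "P \<equiv> PiE_dflt I dd (\<lambda>_. A)"
  assumes I: "finite I" and W: "W \<noteq> {}" and bounded_g: "\<And>a. bounded ((\<lambda>w. g w a) ` W)"
  shows "(\<Sum>S\<in>P. \<Sum>T\<in>P. SUP w\<in>W. \<Sum>i\<in>I. g w (T i) - g w (S i))
         \<le> 2 * card P * (\<Sum>S\<in>P. rademacher_average I W (\<lambda>w i. g w (S i)))"
proof -
  let ?\<Sigma> = "sign_vectors I"
  let ?X = "\<Sum>S\<in>P. \<Sum>T\<in>P. SUP w\<in>W. \<Sum>i\<in>I. g w (T i) - g w (S i)"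
  define R where "R \<sigma> S = (SUP w\<in>W. \<Sum>i\<in>I. \<sigma> i * g w (S i))" for \<sigma> S
  have "card ?\<Sigma> * ?X = (\<Sum>\<sigma>\<in>?\<Sigma>. ?X)" by simp
  also have "\<dots> \<le> (\<Sum>\<sigma>\<in>?\<Sigma>. card P * (\<Sum>S\<in>P. R \<sigma> S) + card P * (\<Sum>S\<in>P. R (\<lambda>i. - \<sigma> i) S))"
    unfolding R_def P_def by (intro sum_mono ghost_sample_sign_swap[OF I W bounded_g])
  also have "\<dots> = card P * (\<Sum>\<sigma>\<in>?\<Sigma>. \<Sum>S\<in>P. R \<sigma> S) + card P * (\<Sum>\<sigma>\<in>?\<Sigma>. \<Sum>S\<in>P. R (\<lambda>i. - \<sigma> i) S)"
    by (simp add: sum.distrib sum_distrib_left)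
  also have "(\<Sum>\<sigma>\<in>?\<Sigma>. \<Sum>S\<in>P. R (\<lambda>i. - \<sigma> i) S) = (\<Sum>\<sigma>\<in>?\<Sigma>. \<Sum>S\<in>P. R \<sigma> S)"
    by (rule sum_sign_vectors_uminus)
  also have "(\<Sum>\<sigma>\<in>?\<Sigma>. \<Sum>S\<in>P. R \<sigma> S) = card ?\<Sigma> * (\<Sum>S\<in>P. rademacher_average I W (\<lambda>w i. g w (S i)))"
    using card_sign_vectors_pos[OF I]
    by (simp add: rademacher_average_def R_def sum.swap[of _ ?\<Sigma>] flip: sum_divide_distrib)
  finally show ?thesis
    using card_sign_vectors_pos[OF I] by (simp add: algebra_simps)
qed

definition uniform_deviation :: "'i set \<Rightarrow> 'a set \<Rightarrow> 'w set \<Rightarrow> ('w \<Rightarrow> 'a \<Rightarrow> real) \<Rightarrow> ('i \<Rightarrow> 'a) \<Rightarrow> real" where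
  "uniform_deviation I A W h S = (SUP w\<in>W. real (card I) * (\<Sum>a\<in>A. h w a) / card A - (\<Sum>i\<in>I. h w (S i)))"

lemma bounded_uniform_deviation_term:
  assumes "finite I" "finite A" and "\<And>a. bounded ((\<lambda>w. h w a) ` W)"
  shows "bounded ((\<lambda>w. real (card I) * (\<Sum>a\<in>A. h w a) / card A - (\<Sum>i\<in>I. h w (S i))) ` W)"
proof -
  have "bounded ((\<lambda>w. (card I / card A) * (\<Sum>a\<in>A. h w a) - (\<Sum>i\<in>I. h w (S i))) ` W)"
    using assms by (intro bounded_minus_comp bounded_cmult_comp bounded_sum_comp)
  then show ?thesis by simp
qed

lemma uniform_deviation_bounded_difference:
  assumes "finite I" "finite A" "i \<in> I" "W \<noteq> {}" and range: "\<And>w a. w \<in> W \<Longrightarrow> h w a \<in> {0..1}"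
  shows "\<bar>uniform_deviation I A W h S - uniform_deviation I A W h (S(i := a))\<bar> \<le> 1"
proof -
  have "bounded ((\<lambda>w. h w b) ` W)" for b
    unfolding bounded_real using range by (intro exI[of _ 1]) force
  then have bounded_term: "bounded ((\<lambda>w. real (card I) * (\<Sum>a\<in>A. h w a) / card A - (\<Sum>i\<in>I. h w (S' i))) ` W)"
    for S'
    by (rule bounded_uniform_deviation_term[OF assms(1,2)])
  show ?thesis
    unfolding uniform_deviation_def
  proof (rule abs_cSUP_diff_le[OF assms(4) bounded_term bounded_term])
    fix w assume "w \<in> W"
    have "(\<Sum>j\<in>I - {i}. h w ((S(i := a)) j)) = (\<Sum>j\<in>I - {i}. h w (S j))"
      by (intro sum.cong) auto
    then have "(\<Sum>j\<in>I. h w ((S(i := a)) j)) = (\<Sum>j\<in>I. h w (S j)) - h w (S i) + h w a"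
      using assms(1,3) by (simp add: sum.remove)
    then show "\<bar>real (card I) * (\<Sum>a\<in>A. h w a) / card A - (\<Sum>j\<in>I. h w (S j))
             - (real (card I) * (\<Sum>a\<in>A. h w a) / card A - (\<Sum>j\<in>I. h w ((S(i := a)) j)))\<bar> \<le> 1"
      using range[OF \<open>w \<in> W\<close>, of a] range[OF \<open>w \<in> W\<close>, of "S i"] by auto
  qed
qed

theorem symmetrization:
  fixes I :: "'i set" and A :: "'a set" and dd :: 'a and h :: "'w \<Rightarrow> 'a \<Rightarrow> real"
  defines "P \<equiv> PiE_dflt I dd (\<lambda>_. A)"
  assumes I: "finite I" and A: "finite A" "A \<noteq> {}" and W: "W \<noteq> {}"
    and bounded_h: "\<And>a. bounded ((\<lambda>w. h w a) ` W)"
  shows "(\<Sum>S\<in>P. uniform_deviation I A W h S) \<le> 2 * (\<Sum>S\<in>P. rademacher_average I W (\<lambda>w i. h w (S i)))"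
proof -
  define D where "D S T = (SUP w\<in>W. \<Sum>i\<in>I. h w (T i) - h w (S i))" for S T
  have finP: "finite P" and cP: "card P > 0" and cA: "card A > 0"
    using I A by (auto simp: P_def card_gt_0_iff)
  have "uniform_deviation I A W h S \<le> (\<Sum>T\<in>P. D S T) / card P" for S
    unfolding uniform_deviation_def
  proof (rule cSUP_least[OF W])
    fix w assume w: "w \<in> W"
    have "card A * (\<Sum>T\<in>P. \<Sum>i\<in>I. h w (T i)) = (\<Sum>i\<in>I. card A * (\<Sum>T\<in>P. h w (T i)))"
      by (simp add: sum.swap[of _ P] sum_distrib_left)
    also have "\<dots> = (\<Sum>i\<in>I. card P * (\<Sum>a\<in>A. h w a))"
      using sum_PiE_dflt_coordinate[OF I _ A(1), of _ "h w" dd]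
      by (intro sum.cong) (simp_all add: P_def mult.commute)
    finally have "card I * (\<Sum>a\<in>A. h w a) / card A = (\<Sum>T\<in>P. \<Sum>i\<in>I. h w (T i)) / card P"
      using cA cP by (simp add: field_simps)
    then have "card I * (\<Sum>a\<in>A. h w a) / card A - (\<Sum>i\<in>I. h w (S i))
        = (\<Sum>T\<in>P. \<Sum>i\<in>I. h w (T i) - h w (S i)) / card P"
      using cP by (simp add: sum_subtractf field_simps)
    also have "\<dots> \<le> (\<Sum>T\<in>P. D S T) / card P"
      unfolding D_def using I bounded_h w
      by (intro divide_right_mono sum_mono cSUP_upper_bounded bounded_sum_comp bounded_minus_comp) auto
    finally show "card I * (\<Sum>a\<in>A. h w a) / card A - (\<Sum>i\<in>I. h w (S i)) \<le> (\<Sum>T\<in>P. D S T) / card P" .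
  qed
  then have "(\<Sum>S\<in>P. uniform_deviation I A W h S) \<le> (\<Sum>S\<in>P. \<Sum>T\<in>P. D S T) / card P"
    by (simp add: sum_mono sum_divide_distrib)
  also have "\<dots> \<le> 2 * (\<Sum>S\<in>P. rademacher_average I W (\<lambda>w i. h w (S i)))"
    using ghost_sample_symmetrization[where I = I and A = A and dd = dd and W = W and g = h, OF I W bounded_h] cP
    by (simp add: D_def P_def pos_divide_le_eq mult.commute mult.left_commute)
  finally show ?thesis .
qed

section \<open>Max-margin halfspaces on the hypercube\<close>

lemma cube_eq_PiE_dflt: "cube d = PiE_dflt {..<d} 0 (\<lambda>_. {-1, 1})"
  unfolding cube_def PiE_dflt_def lessThan_iff by (rule Collect_cong) (meson not_le)

lemma finite_cube: "finite (cube d)"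
  unfolding cube_eq_PiE_dflt by auto

lemma cube_nonempty: "cube d \<noteq> {}"
  unfolding cube_eq_PiE_dflt by simp

abbreviation samples :: "nat \<Rightarrow> nat \<Rightarrow> (nat \<Rightarrow> nat \<Rightarrow> real) set" where
  "samples d n \<equiv> PiE_dflt {..<n} (\<lambda>_. 0) (\<lambda>_. cube d)"

lemma sample_eq_pmf_of_set: "sample d n = pmf_of_set (samples d n)"
  unfolding sample_def DX_def
  using Pi_pmf_of_set[of "{..<n}" "\<lambda>_. cube d" "\<lambda>_. 0"] finite_cube cube_nonempty by simp

definition ramp_loss :: "real \<Rightarrow> real \<Rightarrow> real" where
  "ramp_loss L z = min 1 (max 0 (1 - L * z))"

lemma ramp_loss_lipschitz:
  assumes "L \<ge> 0"
  shows "L-lipschitz_on UNIV (ramp_loss L)"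
proof (rule lipschitz_onI)
  fix z z' :: real
  have "\<bar>min 1 (max 0 (1 - u)) - min 1 (max 0 (1 - u'))\<bar> \<le> \<bar>u - u'\<bar>" for u u' :: real
    by (simp add: min_def max_def abs_if)
  from this[of "L * z" "L * z'"] show "dist (ramp_loss L z) (ramp_loss L z') \<le> L * dist z z'"
    using assms by (simp add: ramp_loss_def dist_real_def abs_mult flip: right_diff_distrib)
qed (rule assms)

lemma ramp_loss_bounds: "0 \<le> ramp_loss L z" "ramp_loss L z \<le> 1"
  unfolding ramp_loss_def by auto

lemma ramp_loss_nonpos:
  assumes "L \<ge> 0" "z \<le> 0"
  shows "ramp_loss L z = 1"
  using mult_nonneg_nonpos[OF assms] by (simp add: ramp_loss_def)

lemma ramp_loss_eq_0: "1 \<le> L * z \<Longrightarrow> ramp_loss L z = 0"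
  unfolding ramp_loss_def by simp

definition margin_loss :: "nat \<Rightarrow> nat \<Rightarrow> (nat \<Rightarrow> real) \<Rightarrow> (nat \<Rightarrow> real) \<Rightarrow> (nat \<Rightarrow> real) \<Rightarrow> real" where
  "margin_loss d k ws w x = ramp_loss (sqrt k) (ystar d ws x * ip d w x)"

abbreviation margin_deviation :: "nat \<Rightarrow> nat \<Rightarrow> nat \<Rightarrow> (nat \<Rightarrow> real) \<Rightarrow> (nat \<Rightarrow> nat \<Rightarrow> real) \<Rightarrow> real" where
  "margin_deviation d k n ws \<equiv> uniform_deviation {..<n} (cube d) (unit_ball d) (margin_loss d k ws)"

lemma bounded_margin_loss: "bounded ((\<lambda>w. margin_loss d k ws w x) ` W)"
  unfolding bounded_real margin_loss_def using ramp_loss_bounds by (intro exI[of _ 1]) force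

lemma abs_sum_odd_signs_ge_1:
  fixes t :: "nat \<Rightarrow> real"
  assumes "odd k" and signs: "\<And>i. i < k \<Longrightarrow> t i \<in> {-1, 1}"
  shows "1 \<le> \<bar>\<Sum>i<k. t i\<bar>"
proof -
  define J where "J = {i \<in> {..<k}. t i = 1}"
  have J: "J \<subseteq> {..<k}" "finite J" by (auto simp: J_def)
  have "(\<Sum>i<k. t i) = (\<Sum>i\<in>{..<k} - J. t i) + (\<Sum>i\<in>J. t i)"
    using J by (simp add: sum.subset_diff)
  also have "\<dots> = (\<Sum>i\<in>{..<k} - J. -1) + (\<Sum>i\<in>J. 1)"
    using signs by (intro arg_cong2[where f = "(+)"] sum.cong) (auto simp: J_def)
  also have "\<dots> = - real (card ({..<k} - J)) + real (card J)"
    by simp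
  also have "\<dots> = 2 * real (card J) - real k"
  proof -
    have "card J \<le> k" using card_mono[OF _ J(1)] by simp
    then show ?thesis using J by (simp add: card_Diff_subset of_nat_diff)
  qed
  finally have sum_eq: "(\<Sum>i<k. t i) = 2 * real (card J) - real k" .
  have "2 * card J \<noteq> k" using assms(1) by auto
  then have "real k + 1 \<le> 2 * real (card J) \<or> 2 * real (card J) + 1 \<le> real k"
    by linarith
  then show ?thesis unfolding sum_eq by linarith
qed

context
  fixes d k :: nat and ws :: "nat \<Rightarrow> real"
  assumes odd_k: "odd k" and k_le_d: "k \<le> d"
    and ws_signs: "\<forall>i<k. ws i \<in> {-1, 1}" and ws_zero: "\<forall>i\<ge>k. ws i = 0"
begin

lemma norm2_target: "norm2 d ws = sqrt k"
proof -
  have "(\<Sum>i<d. (ws i)\<^sup>2) = (\<Sum>i<k. (ws i)\<^sup>2)"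
    using k_le_d ws_zero by (intro sum.mono_neutral_right) auto
  also have "\<dots> = (\<Sum>i<k. 1)"
    using ws_signs by (intro sum.cong) auto
  finally show ?thesis unfolding norm2_def by simp
qed

lemma target_margin_on_cube:
  assumes "x \<in> cube d"
  shows "1 \<le> ystar d ws x * ip d ws x"
proof -
  have "ip d ws x = (\<Sum>i<k. ws i * x i)"
    unfolding ip_def using k_le_d ws_zero by (intro sum.mono_neutral_right) auto
  moreover have "ws i * x i \<in> {-1, 1}" if "i < k" for i
  proof -
    have "ws i \<in> {-1, 1}" "x i \<in> {-1, 1}"
      using ws_signs assms k_le_d that by (auto simp: cube_def)
    then show ?thesis by auto
  qed
  ultimately have "1 \<le> \<bar>ip d ws x\<bar>"
    using abs_sum_odd_signs_ge_1[OF odd_k, of "\<lambda>i. ws i * x i"] by simp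
  then show ?thesis
    unfolding ystar_def by (simp add: abs_sgn mult.commute)
qed

lemma max_margin_sample_margin:
  assumes "n \<ge> 1" "S \<in> samples d n" "max_margin d n ws S w" "i < n"
  shows "1 \<le> sqrt k * (ystar d ws (S i) * ip d w (S i) / norm2 d w)"
proof -
  have sqrt_k: "sqrt k > 0" using odd_k by (simp add: odd_pos)
  have finite_idx: "finite {..<n}" "{..<n} \<noteq> {}" using assms(1) by (auto simp: lessThan_empty_iff)
  have "1 / sqrt k \<le> margin2 d n ws S ws"
    unfolding margin2_def norm2_target
  proof (rule Min.boundedI)
    fix m assume "m \<in> (\<lambda>j. ystar d ws (S j) * ip d ws (S j) / sqrt k) ` {..<n}"
    then obtain j where "j < n" and m: "m = ystar d ws (S j) * ip d ws (S j) / sqrt k" by auto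
    then have "S j \<in> cube d" using assms(2) by (auto simp: PiE_dflt_def)
    then show "1 / sqrt k \<le> m"
      unfolding m using target_margin_on_cube sqrt_k by (simp add: divide_right_mono)
  qed (use finite_idx in auto)
  also have "\<dots> \<le> margin2 d n ws S w"
    using assms(3) norm2_target sqrt_k unfolding max_margin_def by simp
  also have "\<dots> \<le> ystar d ws (S i) * ip d w (S i) / norm2 d w"
    unfolding margin2_def using finite_idx assms(4) by (intro Min_le) auto
  finally show ?thesis using sqrt_k by (simp add: field_simps)
qed

lemma test_err_le_margin_deviation:
  assumes "n \<ge> 1" "S \<in> samples d n" "max_margin d n ws S w"
  shows "real n * test_err d ws w \<le> margin_deviation d k n ws S"
proof -
  define u where "u j = w j / norm2 d w" for j
  have norm_w: "norm2 d w > 0"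
    using assms(3) unfolding max_margin_def norm2_def by (simp add: order_less_le sum_nonneg)
  have ip_u: "ip d u x = ip d w x / norm2 d w" for x
    unfolding ip_def u_def by (simp add: sum_divide_distrib)
  have "norm2 d u = sqrt ((\<Sum>j<d. (w j)\<^sup>2) / (norm2 d w)\<^sup>2)"
    unfolding norm2_def u_def by (simp add: power_divide sum_divide_distrib)
  also have "\<dots> = 1"
    using norm_w by (simp add: norm2_def sum_nonneg)
  finally have u_ball: "u \<in> unit_ball d" by simp
  have empirical_zero: "(\<Sum>i<n. margin_loss d k ws u (S i)) = 0"
    using max_margin_sample_margin[OF assms] by (simp add: margin_loss_def ramp_loss_eq_0 ip_u)
  let ?E = "{x. ystar d ws x * ip d w x \<le> 0}"
  have "test_err d ws w = (\<Sum>x\<in>cube d \<inter> ?E. 1) / card (cube d)"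
    unfolding test_err_def DX_def using finite_cube cube_nonempty by (simp add: measure_pmf_of_set)
  also have "\<dots> = (\<Sum>x\<in>cube d \<inter> ?E. margin_loss d k ws u x) / card (cube d)"
    using norm_w by (intro arg_cong2[where f = "(/)"] sum.cong refl)
      (auto simp: margin_loss_def ip_u ramp_loss_nonpos divide_nonpos_pos)
  also have "\<dots> \<le> (\<Sum>x\<in>cube d. margin_loss d k ws u x) / card (cube d)"
    using finite_cube by (intro divide_right_mono sum_mono2) (auto simp: margin_loss_def ramp_loss_bounds)
  finally have "real n * test_err d ws w \<le> real n * ((\<Sum>x\<in>cube d. margin_loss d k ws u x) / card (cube d))"
    by (rule mult_left_mono) simp
  also have "\<dots> = real (card {..<n}) * (\<Sum>x\<in>cube d. margin_loss d k ws u x) / card (cube d)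
                 - (\<Sum>i<n. margin_loss d k ws u (S i))"
    by (simp add: empirical_zero)
  also have "\<dots> \<le> margin_deviation d k n ws S"
    unfolding uniform_deviation_def using finite_cube bounded_margin_loss
    by (intro cSUP_upper_bounded u_ball bounded_uniform_deviation_term) auto
  finally show ?thesis .
qed

end

lemma rademacher_average_margin_loss:
  assumes "S \<in> samples d n"
  shows "rademacher_average {..<n} (unit_ball d) (\<lambda>w i. margin_loss d k ws w (S i))
         \<le> sqrt (real k * real n * real d)"
proof -
  define z where "z i j = ystar d ws (S i) * S i j" for i j
  have z_bound: "(z i j)\<^sup>2 \<le> 1" if "i < n" for i j
  proof -
    have "S i \<in> cube d" using assms that by (auto simp: PiE_dflt_def)
    then have "\<bar>S i j\<bar> \<le> 1" by (cases "j < d") (auto simp: cube_def)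
    moreover have "\<bar>ystar d ws (S i)\<bar> \<le> 1" by (simp add: ystar_def sgn_real_def)
    ultimately have "\<bar>z i j\<bar> \<le> 1" by (simp add: z_def abs_mult mult_le_one)
    then show ?thesis by (simp add: abs_le_square_iff[of _ 1, simplified])
  qed
  have "margin_loss d k ws w (S i) = ramp_loss (sqrt k) (ip d w (z i))" for w i
    by (simp add: margin_loss_def ip_def z_def sum_distrib_left algebra_simps)
  then have "rademacher_average {..<n} (unit_ball d) (\<lambda>w i. margin_loss d k ws w (S i))
      = rademacher_average {..<n} (unit_ball d) (\<lambda>w i. ramp_loss (sqrt k) (ip d w (z i)))"
    by simp
  also have "\<dots> \<le> rademacher_average {..<n} (unit_ball d) (\<lambda>w i. sqrt k * ip d w (z i))"
    using zero_in_unit_ball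
    by (intro rademacher_average_contraction bounded_ip_unit_ball ramp_loss_lipschitz) auto
  also have "\<dots> = rademacher_average {..<n} (unit_ball d) (\<lambda>w i. ip d w (\<lambda>j. sqrt k * z i j))"
    by (simp add: ip_def sum_distrib_left algebra_simps)
  also have "\<dots> \<le> sqrt (\<Sum>i<n. \<Sum>j<d. (sqrt k * z i j)\<^sup>2)"
    by (rule rademacher_average_linear) simp
  also have "\<dots> \<le> sqrt (\<Sum>i<n. \<Sum>j<d. real k)"
    using z_bound by (intro real_sqrt_le_mono sum_mono) (simp add: power_mult_distrib mult_left_le)
  finally show ?thesis by (simp add: mult.commute mult.left_commute)
qed

lemma expected_margin_deviation_le:
  "(\<Sum>S\<in>samples d n. margin_deviation d k n ws S)
   \<le> card (samples d n) * (2 * sqrt (real k * real n * real d))"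
proof -
  have "(\<Sum>S\<in>samples d n. margin_deviation d k n ws S)
      \<le> 2 * (\<Sum>S\<in>samples d n. rademacher_average {..<n} (unit_ball d) (\<lambda>w i. margin_loss d k ws w (S i)))"
    using finite_cube cube_nonempty zero_in_unit_ball bounded_margin_loss
    by (intro symmetrization) auto
  also have "\<dots> \<le> 2 * (\<Sum>S\<in>samples d n. sqrt (real k * real n * real d))"
    by (intro mult_left_mono sum_mono rademacher_average_margin_loss) auto
  finally show ?thesis by simp
qed

lemma margin_deviation_tail:
  assumes "t > 0"
  shows "measure_pmf.prob (sample d n)
           {S. (\<Sum>T\<in>samples d n. margin_deviation d k n ws T) / card (samples d n) + t
               \<le> margin_deviation d k n ws S}
         \<le> exp (- 2 * t\<^sup>2 / n)"
proof -
  have "measure_pmf.prob (pmf_of_set (samples d n))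
          {S. (\<Sum>T\<in>samples d n. margin_deviation d k n ws T) / card (samples d n) + t
              \<le> margin_deviation d k n ws S}
        \<le> exp (- 2 * t\<^sup>2 / (real (card {..<n}) * 1\<^sup>2))"
  proof (rule McDiarmid_inequality_uniform_product[OF _ finite_cube cube_nonempty _ assms])
    show "\<bar>margin_deviation d k n ws S - margin_deviation d k n ws (S(i := a))\<bar> \<le> 1"
      if "i \<in> {..<n}" for S i a
      using that zero_in_unit_ball
      by (intro uniform_deviation_bounded_difference finite_cube)
        (auto simp: margin_loss_def ramp_loss_bounds)
  qed auto
  then show ?thesis by (simp add: sample_eq_pmf_of_set)
qed

lemma margin_deviation_concentration:
  fixes \<delta> :: real
  assumes "n \<ge> 1" "0 < \<delta>" "\<delta> < 1"
  shows "1 - \<delta> \<le> measure_pmf.prob (sample d n)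
           {S \<in> samples d n. margin_deviation d k n ws S
                             < 2 * sqrt (real k * real n * real d) + sqrt (n * ln (1 / \<delta>) / 2)}"
proof -
  let ?P = "samples d n" and ?dev = "margin_deviation d k n ws"
  define \<mu> where "\<mu> = (\<Sum>S\<in>?P. ?dev S) / card ?P"
  define t where "t = sqrt (n * ln (1 / \<delta>) / 2)"
  define Bad where "Bad = {S. \<mu> + t \<le> ?dev S}"
  have finP: "finite ?P" and cP: "card ?P > 0"
    using finite_cube cube_nonempty by (auto simp: card_gt_0_iff)
  have ln_pos: "ln (1 / \<delta>) > 0" using assms by simp
  have "measure_pmf.prob (sample d n) Bad \<le> exp (- 2 * t\<^sup>2 / n)"
    unfolding Bad_def \<mu>_def using assms ln_pos by (intro margin_deviation_tail) (simp add: t_def)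
  also have "\<dots> = exp (- ln (1 / \<delta>))"
    using assms ln_pos by (simp add: t_def)
  also have "\<dots> = \<delta>"
    using assms by (simp add: ln_div)
  finally have prob_Bad: "measure_pmf.prob (sample d n) Bad \<le> \<delta>" .
  have "\<mu> \<le> 2 * sqrt (real k * real n * real d)"
    using expected_margin_deviation_le[where d = d and n = n and k = k and ws = ws] cP
    by (simp add: \<mu>_def pos_divide_le_eq mult.commute)
  then have "?P - Bad \<subseteq> {S \<in> ?P. ?dev S < 2 * sqrt (real k * real n * real d) + t}"
    by (auto simp: Bad_def)
  then have "measure_pmf.prob (sample d n) (?P - Bad)
      \<le> measure_pmf.prob (sample d n) {S \<in> ?P. ?dev S < 2 * sqrt (real k * real n * real d) + t}"
    by (intro measure_pmf.finite_measure_mono) auto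
  moreover have "measure_pmf.prob (sample d n) ?P = 1"
    using finP cP by (simp add: sample_eq_pmf_of_set measure_pmf_of_set card_gt_0_iff)
  moreover have "measure_pmf.prob (sample d n) (?P \<inter> Bad) \<le> measure_pmf.prob (sample d n) Bad"
    by (intro measure_pmf.finite_measure_mono) auto
  ultimately show ?thesis
    using prob_Bad unfolding t_def by (simp add: measure_pmf.finite_measure_Diff')
qed

lemma margin_deviation_bound_le:
  fixes \<delta> :: real
  assumes "n \<ge> 1" "0 < \<delta>" "\<delta> < 1"
  shows "(2 * sqrt (real k * real n * real d) + sqrt (n * ln (1 / \<delta>) / 2)) / n
         \<le> 4 * sqrt (real k * real d / real n) + 3 * sqrt (ln (2 / \<delta>) / (2 * real n))"
proof -
  have n: "real n > 0" using assms by simp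
  have sqrt_div_n: "sqrt (x * (real n)\<^sup>2) / n = sqrt x" for x
    using n by (simp add: real_sqrt_mult)
  have "(2 * sqrt (real k * real n * real d) + sqrt (n * ln (1 / \<delta>) / 2)) / n
      = 2 * (sqrt (real k * real d / real n * (real n)\<^sup>2) / n)
        + sqrt (ln (1 / \<delta>) / (2 * real n) * (real n)\<^sup>2) / n"
    using n by (simp add: add_divide_distrib power2_eq_square ac_simps)
  also have "\<dots> = 2 * sqrt (real k * real d / real n) + sqrt (ln (1 / \<delta>) / (2 * real n))"
    by (simp only: sqrt_div_n)
  also have "\<dots> \<le> 4 * sqrt (real k * real d / real n) + 3 * sqrt (ln (2 / \<delta>) / (2 * real n))"
  proof -
    have "ln (1 / \<delta>) \<le> ln (2 / \<delta>)" "0 \<le> ln (1 / \<delta>)"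
      using assms by (simp_all add: divide_right_mono)
    then have "ln (1 / \<delta>) / (2 * real n) \<le> ln (2 / \<delta>) / (2 * real n)" "0 \<le> ln (1 / \<delta>) / (2 * real n)"
      using n by (simp_all add: divide_right_mono)
    then have "sqrt (ln (1 / \<delta>) / (2 * real n)) \<le> sqrt (ln (2 / \<delta>) / (2 * real n))"
      "0 \<le> sqrt (ln (1 / \<delta>) / (2 * real n))"
      by simp_all
    moreover have "0 \<le> sqrt (real k * real d / real n)" by simp
    ultimately show ?thesis by linarith
  qed
  finally show ?thesis .
qed

theorem theoremE4:
  fixes d k n :: nat and \<delta> :: real and ws :: "nat \<Rightarrow> real"
  assumes "odd k" and "k \<le> d" and "n \<ge> 1"
    and "0 < \<delta>" and "\<delta> < 1"
    and "\<forall>i<k. ws i \<in> {-1, 1}" and "\<forall>i\<ge>k. ws i = 0"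
  shows "measure_pmf.prob (sample d n)
           {S. \<forall>w. max_margin d n ws S w \<longrightarrow>
                 test_err d ws w \<le> 4 * sqrt (real k * real d / real n)
                                    + 3 * sqrt (ln (2 / \<delta>) / (2 * real n))}
         \<ge> 1 - \<delta>"
proof -
  define B where "B = 2 * sqrt (real k * real n * real d) + sqrt (n * ln (1 / \<delta>) / 2)"
  let ?bound = "4 * sqrt (real k * real d / real n) + 3 * sqrt (ln (2 / \<delta>) / (2 * real n))"
  have good: "test_err d ws w \<le> ?bound"
    if "S \<in> samples d n" "margin_deviation d k n ws S < B" "max_margin d n ws S w" for S w
  proof -
    have "real n * test_err d ws w < B"
      using test_err_le_margin_deviation[OF assms(1,2,6,7,3) that(1,3)] that(2) by linarith
    then have "test_err d ws w \<le> B / n"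
      using assms(3) by (simp add: field_simps)
    also have "\<dots> \<le> ?bound"
      unfolding B_def using assms(3-5) by (rule margin_deviation_bound_le)
    finally show ?thesis .
  qed
  have "1 - \<delta> \<le> measure_pmf.prob (sample d n) {S \<in> samples d n. margin_deviation d k n ws S < B}"
    unfolding B_def using assms(3-5) by (rule margin_deviation_concentration)
  also have "\<dots> \<le> measure_pmf.prob (sample d n) {S. \<forall>w. max_margin d n ws S w \<longrightarrow> test_err d ws w \<le> ?bound}"
    using good by (intro measure_pmf.finite_measure_mono) auto
  finally show ?thesis .
qed

end
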